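(* Let $(S,\mathcal C)$ be a connectoid and $T$ a rooted undirected tree with $V(T)\subseteq S$. Then $T$ is a weak normal tree of $(S,\mathcal C)$ if and only if $K_t^T\cap V(T)=\mathrm{Up}_T(t)$ for every $t\in V(T)$. Furthermore, if $T$ is a weak normal tree with $V(T)=S$, then $K_t^T=\mathrm{Up}_T(t)$ for every $t\in V(T)$.
   Context: A connectoid is given by a set $S$ and a set $\mathcal F$ of finite subsets of $S$ such that (i) $F\cup F'\in\mathcal F$ whenever $F,F'\in\mathcal F$ and $F\cap F'\neq\emptyset$, and (ii) $\emptyset\in\mathcal F$ and $\{s\}\in\mathcal F$ for every $s\in S$. A set $C\subseteq S$ is connected if for all $x,y\in C$ there is $F\in\mathcal F$ with $F\subseteq C$ and $x,y\in F$; $\mathcal C$ is the set of connected sets. For $S'\subseteq S$, a component of $S'$ is a maximal connected subset of $S'$, and $\mathcal K(S')$ is the set of components of $S'$. For a rooted tree $T$ with tree order $\le_T$ (root is the minimum) and $t\in V(T)$: $\mathrm{Up}_T(t)=\{x\in V(T):t\le_T x\}$, $\mathrm{Down}^\circ_T(t)=\{x\in V(T):x<_T t\}$, and $K_t^T$ denotes the element of $\mathcal K(S\setminus\mathrm{Down}^\circ_T(t))$ containing $t$. A weak normal tree of $(S,\mathcal C)$ is a rooted undirected tree $T$ with $V(T)\subseteq S$ such that (1) for every $C\in\mathcal C$ and every two $\le_T$-incomparable $u,v\in C\cap V(T)$ there is $w\in C$ with $w\le_T u$ and $w\le_T v$, and (2) for all $u\le_T v$ in $V(T)$ there is $C\in\mathcal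 C$ containing $u$ and $v$ with $C\cap\mathrm{Down}^\circ_T(u)=\emptyset$. *)

theory Defs
  imports Main
begin

definition connectoid :: "'a set \<Rightarrow> 'a set set \<Rightarrow> bool" where
  "connectoid S \<F> \<longleftrightarrow>
     (\<forall>F\<in>\<F>. finite F \<and> F \<subseteq> S) \<and>
     (\<forall>F\<in>\<F>. \<forall>F'\<in>\<F>. F \<inter> F' \<noteq> {} \<longrightarrow> F \<union> F' \<in> \<F>) \<and>
     {} \<in> \<F> \<and> (\<forall>s\<in>S. {s} \<in> \<F>)"

text \<open>Connected sets of the connectoid (the set \<open>\<C>\<close>).\<close>
definition conn_set :: "'a set \<Rightarrow> 'a set set \<Rightarrow> 'a set \<Rightarrow> bool" where
  "conn_set S \<F> C \<longleftrightarrow> C \<subseteq> S \<and>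
     (\<forall>x\<in>C. \<forall>y\<in>C. \<exists>F\<in>\<F>. F \<subseteq> C \<and> x \<in> F \<and> y \<in> F)"

definition components_of :: "'a set \<Rightarrow> 'a set set \<Rightarrow> 'a set \<Rightarrow> 'a set set" where
  "components_of S \<F> S' = {K. K \<subseteq> S' \<and> conn_set S \<F> K \<and>
       (\<forall>K'. K \<subseteq> K' \<and> K' \<subseteq> S' \<and> conn_set S \<F> K' \<longrightarrow> K' = K)}"

definition comp_containing :: "'a set \<Rightarrow> 'a set set \<Rightarrow> 'a set \<Rightarrow> 'a \<Rightarrow> 'a set" where
  "comp_containing S \<F> S' t = (THE K. K \<in> components_of S \<F> S' \<and> t \<in> K)"

definition is_graph :: "'a set \<Rightarrow> 'a set set \<Rightarrow> bool" where
  "is_graph V E \<longleftrightarrow> (\<forall>e\<in>E. \<exists>u v. e = {u, v} \<and> u \<noteq> v \<and> u \<in> V \<and> v \<in> V)"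

definition is_path :: "'a set \<Rightarrow> 'a set set \<Rightarrow> 'a \<Rightarrow> 'a \<Rightarrow> 'a list \<Rightarrow> bool" where
  "is_path V E x y p \<longleftrightarrow> p \<noteq> [] \<and> hd p = x \<and> last p = y \<and> distinct p \<and> set p \<subseteq> V \<and>
     (\<forall>i. Suc i < length p \<longrightarrow> {p ! i, p ! Suc i} \<in> E)"

definition is_cycle :: "'a set \<Rightarrow> 'a set set \<Rightarrow> 'a list \<Rightarrow> bool" where
  "is_cycle V E c \<longleftrightarrow> length c \<ge> 3 \<and> distinct c \<and> set c \<subseteq> V \<and>
     (\<forall>i. Suc i < length c \<longrightarrow> {c ! i, c ! Suc i} \<in> E) \<and> {last c, hd c} \<in> E"

definition is_tree :: "'a set \<Rightarrow> 'a set set \<Rightarrow> bool" where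
  "is_tree V E \<longleftrightarrow> is_graph V E \<and> V \<noteq> {} \<and>
     (\<forall>x\<in>V. \<forall>y\<in>V. \<exists>p. is_path V E x y p) \<and> (\<nexists>c. is_cycle V E c)"

definition rooted_tree :: "'a set \<Rightarrow> 'a set set \<Rightarrow> 'a \<Rightarrow> bool" where
  "rooted_tree V E r \<longleftrightarrow> is_tree V E \<and> r \<in> V"

definition tree_le :: "'a set \<Rightarrow> 'a set set \<Rightarrow> 'a \<Rightarrow> 'a \<Rightarrow> 'a \<Rightarrow> bool" where
  "tree_le V E r x y \<longleftrightarrow> (\<exists>p. is_path V E r y p \<and> x \<in> set p)"

definition Up :: "'a set \<Rightarrow> 'a set set \<Rightarrow> 'a \<Rightarrow> 'a \<Rightarrow> 'a set" where
  "Up V E r t = {x\<in>V. tree_le V E r t x}"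

definition Down_strict :: "'a set \<Rightarrow> 'a set set \<Rightarrow> 'a \<Rightarrow> 'a \<Rightarrow> 'a set" where
  "Down_strict V E r t = {x\<in>V. tree_le V E r x t \<and> x \<noteq> t}"

definition K_T :: "'a set \<Rightarrow> 'a set set \<Rightarrow> 'a set \<Rightarrow> 'a set set \<Rightarrow> 'a \<Rightarrow> 'a \<Rightarrow> 'a set" where
  "K_T S \<F> V E r t = comp_containing S \<F> (S - Down_strict V E r t) t"

definition weak_normal_tree :: "'a set \<Rightarrow> 'a set set \<Rightarrow> 'a set \<Rightarrow> 'a set set \<Rightarrow> 'a \<Rightarrow> bool" where
  "weak_normal_tree S \<F> V E r \<longleftrightarrow>
     rooted_tree V E r \<and> V \<subseteq> S \<and>
     (\<forall>C. conn_set S \<F> C \<longrightarrow>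
        (\<forall>u\<in>C \<inter> V. \<forall>v\<in>C \<inter> V.
           \<not> tree_le V E r u v \<and> \<not> tree_le V E r v u \<longrightarrow>
           (\<exists>w\<in>C. tree_le V E r w u \<and> tree_le V E r w v))) \<and>
     (\<forall>u\<in>V. \<forall>v\<in>V. tree_le V E r u v \<longrightarrow>
        (\<exists>C. conn_set S \<F> C \<and> u \<in> C \<and> v \<in> C \<and> C \<inter> Down_strict V E r u = {}))"

end

theory Submission
  imports Defs
begin

text \<open>
  For \<open>t \<le>\<^sub>T x\<close> a witness of condition (2) is a connected set avoiding \<open>Down\<degree>(t)\<close> and containing
  \<open>t, x\<close>, so it lies in \<open>K\<^sub>t\<close>; conversely, a vertex of \<open>K\<^sub>t\<close> cannot lie strictly below \<open>t\<close>, and if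
  it were incomparable with \<open>t\<close>, condition (1) applied to the connected set \<open>K\<^sub>t\<close> would yield a
  common lower bound in \<open>K\<^sub>t\<close>, which can only be \<open>t\<close> itself.
  For the converse, given a connected set \<open>C\<close> meeting \<open>V\<close> in \<open>u\<close>, let \<open>w\<close> be the first vertex of
  \<open>C\<close> on the root path to \<open>u\<close>. Then \<open>C\<close> avoids \<open>Down\<degree>(w)\<close> and meets \<open>K\<^sub>w\<close> in \<open>u \<in> Up(w)\<close>, so
  \<open>C \<subseteq> K\<^sub>w\<close> by maximality, and \<open>C \<inter> V \<subseteq> Up(w)\<close> gives condition (1); condition (2) is witnessed
  by \<open>K\<^sub>u\<close> itself. The tree-theoretic input is that root paths are unique, which is what makes
  \<open>\<le>\<^sub>T\<close> readable off any single root path.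
\<close>

fun walk :: "'a set set \<Rightarrow> 'a list \<Rightarrow> bool" where
  "walk E [] = True"
| "walk E [x] = True"
| "walk E (x # y # xs) \<longleftrightarrow> {x, y} \<in> E \<and> walk E (y # xs)"

lemma walk_iff_nth: "walk E p \<longleftrightarrow> (\<forall>i. Suc i < length p \<longrightarrow> {p ! i, p ! Suc i} \<in> E)"
proof (induction E p rule: walk.induct)
  case (3 E x y xs)
  then show ?case
    by (auto simp: nth_Cons' less_Suc_eq_0_disj)
qed auto

lemma walk_Cons: "walk E (x # xs) \<longleftrightarrow> walk E xs \<and> (xs \<noteq> [] \<longrightarrow> {x, hd xs} \<in> E)"
  by (cases xs) auto

lemma walk_append:
  "walk E (xs @ ys) \<longleftrightarrow> walk E xs \<and> walk E ys \<and> (xs \<noteq> [] \<longrightarrow> ys \<noteq> [] \<longrightarrow> {last xs, hd ys} \<in> E)"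
  by (induction xs) (auto simp: walk_Cons)

lemma walk_rev: "walk E (rev xs) \<longleftrightarrow> walk E xs"
  by (induction xs) (auto simp: walk_append walk_Cons last_rev insert_commute)

lemma is_path_iff_walk:
  "is_path V E x y p \<longleftrightarrow> p \<noteq> [] \<and> hd p = x \<and> last p = y \<and> distinct p \<and> set p \<subseteq> V \<and> walk E p"
  by (simp add: is_path_def walk_iff_nth)

lemma is_cycle_iff_walk:
  "is_cycle V E c \<longleftrightarrow> length c \<ge> 3 \<and> distinct c \<and> set c \<subseteq> V \<and> walk E c \<and> {last c, hd c} \<in> E"
  by (simp add: is_cycle_def walk_iff_nth)

subsection \<open>Uniqueness of paths in acyclic graphs\<close>

lemma cycle_from_paths_to_common_end:
  assumes "walk E p" "distinct p" "set p \<subseteq> V" "p \<noteq> []"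
    and "walk E q" "distinct q" "set q \<subseteq> V" "q \<noteq> []"
    and "last p = last q" "hd p \<noteq> hd q"
    and "a \<in> V" "a \<notin> set p" "a \<notin> set q" "{a, hd p} \<in> E" "{a, hd q} \<in> E"
  shows "\<exists>c. is_cycle V E c"
proof -
  have "\<exists>z\<in>set p. z \<in> set q"
    using assms(4,8,9) by (metis last_in_set)
  then obtain xs z ys where p: "p = xs @ z # ys" and "z \<in> set q" and xs: "\<forall>y\<in>set xs. y \<notin> set q"
    using split_list_first_prop[of p "\<lambda>z. z \<in> set q"] by blast
  then obtain us vs where q: "q = us @ z # vs"
    by (metis split_list)
  \<comment> \<open>go from \<open>a\<close> along \<open>p\<close> to its first vertex \<open>z\<close> on \<open>q\<close>, then back along \<open>q\<close>\<close>
  define c where "c = a # xs @ z # rev us"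
  have "xs \<noteq> [] \<or> us \<noteq> []"
    using assms(10) p q by auto
  then have "length c \<ge> 3"
    unfolding c_def by (auto simp: Suc_le_eq)
  moreover have "distinct c" "set c \<subseteq> V"
    using assms(2,3,6,7,11-13) p q xs unfolding c_def by auto
  moreover have "walk E c"
  proof -
    have "hd (xs @ z # rev us) = hd p"
      using p by (cases xs) auto
    then show ?thesis
      using assms(1,5,14) unfolding c_def p q
      by (auto simp: walk_append walk_Cons walk_rev hd_rev insert_commute)
  qed
  moreover have "{last c, hd c} \<in> E"
    using assms(15) unfolding c_def q by (cases us) (auto simp: last_rev insert_commute)
  ultimately show ?thesis
    by (auto simp: is_cycle_iff_walk)
qed

lemma acyclic_walk_unique:
  assumes "\<nexists>c. is_cycle V E c"
  shows "\<lbrakk>walk E p; distinct p; set p \<subseteq> V; p \<noteq> [];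
          walk E q; distinct q; set q \<subseteq> V; q \<noteq> [];
          hd p = hd q; last p = last q\<rbrakk> \<Longrightarrow> p = q"
proof (induction p arbitrary: q)
  case Nil
  then show ?case by simp
next
  case (Cons a p')
  obtain q' where q: "q = a # q'"
    using Cons.prems by (cases q) auto
  show ?case
  proof (cases "p' = []")
    case True
    then have "q' = []"
      using Cons.prems q by (metis distinct.simps(2) last.simps last_in_set list.sel(1))
    then show ?thesis using True q by simp
  next
    case False
    have "q' \<noteq> []"
      using Cons.prems q False by (metis distinct.simps(2) last.simps last_in_set)
    then have "last p' = last q'"
      using Cons.prems q False by simp
    consider "hd p' = hd q'" | "hd p' \<noteq> hd q'" by blast
    then show ?thesis
    proof cases
      case 1
      then show ?thesis
        using Cons.IH[of q'] Cons.prems q False \<open>q' \<noteq> []\<close> \<open>last p' = last q'\<close>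
        by (simp add: walk_Cons)
    next
      case 2
      then have "\<exists>c. is_cycle V E c"
        using cycle_from_paths_to_common_end[of E p' V q' a] Cons.prems q False \<open>q' \<noteq> []\<close>
          \<open>last p' = last q'\<close> by (simp add: walk_Cons)
      then show ?thesis using assms by blast
    qed
  qed
qed

lemma rooted_tree_path_unique:
  assumes "rooted_tree V E r" "is_path V E x y p" "is_path V E x y q"
  shows "p = q"
  using acyclic_walk_unique[of V E p q] assms
  unfolding rooted_tree_def is_tree_def by (simp add: is_path_iff_walk)

lemma tree_le_in_V:
  assumes "tree_le V E r x y"
  shows "x \<in> V" "y \<in> V"
  using assms unfolding tree_le_def is_path_def by (auto dest: last_in_set)

lemma tree_le_refl:
  assumes "rooted_tree V E r" "t \<in> V"
  shows "tree_le V E r t t"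
  using assms unfolding rooted_tree_def is_tree_def tree_le_def is_path_def by (metis last_in_set)

lemma tree_le_iff_mem_root_path:
  assumes "rooted_tree V E r" "is_path V E r y p"
  shows "tree_le V E r x y \<longleftrightarrow> x \<in> set p"
  using assms rooted_tree_path_unique unfolding tree_le_def by metis

lemma ex_tree_minimal_below:
  assumes "rooted_tree V E r" "u \<in> C" "u \<in> V"
  shows "\<exists>w\<in>C. tree_le V E r w u \<and> C \<inter> Down_strict V E r w = {}"
proof -
  obtain p where p: "is_path V E r u p"
    using assms unfolding rooted_tree_def is_tree_def by blast
  then have "\<exists>z\<in>set p. z \<in> C"
    using assms(2) unfolding is_path_def by (metis last_in_set)
  then obtain ys w zs where pw: "p = ys @ w # zs" and "w \<in> C" and ys: "\<forall>y\<in>set ys. y \<notin> C"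
    using split_list_first_prop[of p "\<lambda>z. z \<in> C"] by blast
  have "tree_le V E r w u"
    using p pw unfolding tree_le_def by auto
  moreover have "is_path V E r w (ys @ [w])"
  proof -
    have "hd (ys @ [w]) = r"
      using p pw unfolding is_path_def by (cases ys) auto
    then show ?thesis
      using p pw by (auto simp: is_path_iff_walk walk_append)
  qed
  then have "C \<inter> Down_strict V E r w = {}"
    using ys tree_le_iff_mem_root_path[OF assms(1)] unfolding Down_strict_def by auto
  ultimately show ?thesis
    using \<open>w \<in> C\<close> by blast
qed

lemma conn_set_singleton:
  assumes "connectoid S \<F>" "t \<in> S"
  shows "conn_set S \<F> {t}"
  using assms unfolding connectoid_def conn_set_def by blast

lemma conn_set_Un:
  assumes \<F>: "connectoid S \<F>" and A: "conn_set S \<F> A" and B: "conn_set S \<F> B"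
    and "z \<in> A" "z \<in> B"
  shows "conn_set S \<F> (A \<union> B)"
proof -
  have to_z: "\<exists>G\<in>\<F>. G \<subseteq> A \<union> B \<and> x \<in> G \<and> z \<in> G" if x: "x \<in> A \<union> B" for x
  proof -
    have "\<exists>G\<in>\<F>. (G \<subseteq> A \<or> G \<subseteq> B) \<and> x \<in> G \<and> z \<in> G"
    proof (cases "x \<in> A")
      case True
      then show ?thesis using A \<open>z \<in> A\<close> unfolding conn_set_def by blast
    next
      case False
      then have "x \<in> B" using x by blast
      then show ?thesis using B \<open>z \<in> B\<close> unfolding conn_set_def by blast
    qed
    then show ?thesis by blast
  qed
  have "\<exists>G\<in>\<F>. G \<subseteq> A \<union> B \<and> x \<in> G \<and> y \<in> G" if "x \<in> A \<union> B" "y \<in> A \<union> B" for x y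
  proof -
    obtain G1 G2 where "G1 \<in> \<F>" "G1 \<subseteq> A \<union> B" "x \<in> G1" "z \<in> G1"
      and "G2 \<in> \<F>" "G2 \<subseteq> A \<union> B" "y \<in> G2" "z \<in> G2"
      using to_z \<open>x \<in> A \<union> B\<close> \<open>y \<in> A \<union> B\<close> by meson
    moreover have "G1 \<union> G2 \<in> \<F>"
      using \<F> \<open>G1 \<in> \<F>\<close> \<open>G2 \<in> \<F>\<close> \<open>z \<in> G1\<close> \<open>z \<in> G2\<close> unfolding connectoid_def by blast
    ultimately show ?thesis
      by (intro bexI[of _ "G1 \<union> G2"]) auto
  qed
  moreover have "A \<union> B \<subseteq> S"
    using A B unfolding conn_set_def by blast
  ultimately show ?thesis
    unfolding conn_set_def by blast
qed

lemma conn_set_Union_common_point: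
  assumes \<F>: "connectoid S \<F>" and "\<forall>C\<in>\<CC>. conn_set S \<F> C \<and> t \<in> C"
  shows "conn_set S \<F> (\<Union>\<CC>)"
  unfolding conn_set_def
proof (intro conjI ballI)
  show "\<Union>\<CC> \<subseteq> S"
    using assms(2) unfolding conn_set_def by blast
next
  fix x y assume "x \<in> \<Union>\<CC>" "y \<in> \<Union>\<CC>"
  then obtain C1 C2 where C: "C1 \<in> \<CC>" "x \<in> C1" "C2 \<in> \<CC>" "y \<in> C2" by blast
  then have "conn_set S \<F> (C1 \<union> C2)"
    using conn_set_Un[OF \<F>, of C1 C2 t] assms(2) by blast
  then obtain G where "G \<in> \<F>" "G \<subseteq> C1 \<union> C2" "x \<in> G" "y \<in> G"
    using C(2,4) unfolding conn_set_def by blast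
  moreover have "C1 \<union> C2 \<subseteq> \<Union>\<CC>"
    using C by blast
  ultimately show "\<exists>G\<in>\<F>. G \<subseteq> \<Union>\<CC> \<and> x \<in> G \<and> y \<in> G"
    by (intro bexI[of _ G]) auto
qed

lemma
  assumes \<F>: "connectoid S \<F>" and "S' \<subseteq> S" "t \<in> S'"
  shows comp_containing_eq_Union:
      "comp_containing S \<F> S' t = \<Union>{C. C \<subseteq> S' \<and> conn_set S \<F> C \<and> t \<in> C}"
    and conn_set_comp_containing: "conn_set S \<F> (comp_containing S \<F> S' t)"
proof -
  let ?U = "\<Union>{C. C \<subseteq> S' \<and> conn_set S \<F> C \<and> t \<in> C}"
  have "t \<in> ?U"
    using conn_set_singleton[OF \<F>] assms(2,3) by blast
  have "conn_set S \<F> ?U"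
    by (rule conn_set_Union_common_point[OF \<F>, of _ t]) blast
  moreover have "K' = ?U" if "?U \<subseteq> K'" "K' \<subseteq> S'" "conn_set S \<F> K'" for K'
  proof -
    have "t \<in> K'"
      using that(1) \<open>t \<in> ?U\<close> by blast
    then have "K' \<subseteq> ?U"
      using that(2,3) by (intro Union_upper) simp
    then show ?thesis
      using that(1) by blast
  qed
  ultimately have component: "?U \<in> components_of S \<F> S'"
    unfolding components_of_def by blast
  have unique: "K = ?U" if K: "K \<in> components_of S \<F> S'" "t \<in> K" for K
  proof -
    have "K \<subseteq> S'" "conn_set S \<F> K"
      and maximal: "\<And>K'. \<lbrakk>K \<subseteq> K'; K' \<subseteq> S'; conn_set S \<F> K'\<rbrakk> \<Longrightarrow> K' = K"
      using K(1) unfolding components_of_def by blast+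
    then have "K \<subseteq> ?U"
      using K(2) by (intro Union_upper) simp
    then show ?thesis
      using maximal[of ?U] \<open>conn_set S \<F> ?U\<close> by blast
  qed
  show eq: "comp_containing S \<F> S' t = ?U"
    unfolding comp_containing_def
    by (rule the_equality) (use component unique \<open>t \<in> ?U\<close> in blast)+
  show "conn_set S \<F> (comp_containing S \<F> S' t)"
    unfolding eq by fact
qed

lemma
  assumes "connectoid S \<F>" "S' \<subseteq> S" "t \<in> S'"
  shows mem_comp_containing: "t \<in> comp_containing S \<F> S' t"
    and comp_containing_subset: "comp_containing S \<F> S' t \<subseteq> S'"
    and conn_set_subset_comp_containing:
      "\<lbrakk>conn_set S \<F> C; C \<subseteq> S'; t \<in> C\<rbrakk> \<Longrightarrow> C \<subseteq> comp_containing S \<F> S' t"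
  using comp_containing_eq_Union[OF assms] conn_set_singleton[OF assms(1)] assms(2,3) by blast+

lemma
  assumes "connectoid S \<F>" "V \<subseteq> S" "t \<in> V"
  shows mem_K_T: "t \<in> K_T S \<F> V E r t"
    and K_T_subset: "K_T S \<F> V E r t \<subseteq> S - Down_strict V E r t"
    and conn_set_K_T: "conn_set S \<F> (K_T S \<F> V E r t)"
    and conn_set_subset_K_T:
      "\<lbrakk>conn_set S \<F> C; C \<inter> Down_strict V E r t = {}; t \<in> C\<rbrakk> \<Longrightarrow> C \<subseteq> K_T S \<F> V E r t"
proof -
  have t: "t \<in> S - Down_strict V E r t"
    using assms(2,3) unfolding Down_strict_def by blast
  show "t \<in> K_T S \<F> V E r t" "K_T S \<F> V E r t \<subseteq> S - Down_strict V E r t"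
    "conn_set S \<F> (K_T S \<F> V E r t)"
    unfolding K_T_def
    using mem_comp_containing[OF assms(1) _ t] comp_containing_subset[OF assms(1) _ t]
      conn_set_comp_containing[OF assms(1) _ t] by blast+
  show "C \<subseteq> K_T S \<F> V E r t"
    if "conn_set S \<F> C" "C \<inter> Down_strict V E r t = {}" "t \<in> C"
    using that conn_set_subset_comp_containing[OF assms(1) _ t, of C]
    unfolding K_T_def conn_set_def by blast
qed

lemma K_T_inter_eq_Up_if_weak_normal_tree:
  assumes \<F>: "connectoid S \<F>" and wnt: "weak_normal_tree S \<F> V E r" and "t \<in> V"
  shows "K_T S \<F> V E r t \<inter> V = Up V E r t"
proof
  have rt: "rooted_tree V E r" and "V \<subseteq> S"
    using wnt unfolding weak_normal_tree_def by blast+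
  note K = mem_K_T[OF \<F> \<open>V \<subseteq> S\<close> \<open>t \<in> V\<close>] K_T_subset[OF \<F> \<open>V \<subseteq> S\<close> \<open>t \<in> V\<close>]
    conn_set_K_T[OF \<F> \<open>V \<subseteq> S\<close> \<open>t \<in> V\<close>] conn_set_subset_K_T[OF \<F> \<open>V \<subseteq> S\<close> \<open>t \<in> V\<close>]
  show "Up V E r t \<subseteq> K_T S \<F> V E r t \<inter> V"
  proof
    fix x assume "x \<in> Up V E r t"
    then have "x \<in> V" "tree_le V E r t x"
      unfolding Up_def by blast+
    then obtain C where "conn_set S \<F> C" "t \<in> C" "x \<in> C" "C \<inter> Down_strict V E r t = {}"
      using wnt \<open>t \<in> V\<close> unfolding weak_normal_tree_def by blast
    then show "x \<in> K_T S \<F> V E r t \<inter> V"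
      using K(4) \<open>x \<in> V\<close> by blast
  qed
  have only_t_below_t: "w = t" if "w \<in> K_T S \<F> V E r t" "tree_le V E r w t" for w
    using that K(2) tree_le_in_V[OF that(2)] unfolding Down_strict_def by blast
  show "K_T S \<F> V E r t \<inter> V \<subseteq> Up V E r t"
  proof
    fix x assume x: "x \<in> K_T S \<F> V E r t \<inter> V"
    consider "tree_le V E r t x" | "tree_le V E r x t"
      | "\<not> tree_le V E r t x" "\<not> tree_le V E r x t" by blast
    then have "tree_le V E r t x"
    proof cases
      case 2
      then show ?thesis
        using only_t_below_t x tree_le_refl[OF rt \<open>t \<in> V\<close>] by blast
    next
      case 3
      have "\<forall>u\<in>K_T S \<F> V E r t \<inter> V. \<forall>v\<in>K_T S \<F> V E r t \<inter> V.
          \<not> tree_le V E r u v \<and> \<not> tree_le V E r v u \<longrightarrow>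
          (\<exists>w\<in>K_T S \<F> V E r t. tree_le V E r w u \<and> tree_le V E r w v)"
        using wnt K(3) unfolding weak_normal_tree_def by blast
      then obtain w where "w \<in> K_T S \<F> V E r t" "tree_le V E r w t" "tree_le V E r w x"
        using 3 K(1) x \<open>t \<in> V\<close> by blast
      then show ?thesis
        using only_t_below_t by blast
    qed
    then show "x \<in> Up V E r t"
      using x unfolding Up_def by blast
  qed
qed

lemma weak_normal_tree_if_K_T_inter_eq_Up:
  assumes \<F>: "connectoid S \<F>" and rt: "rooted_tree V E r" and "V \<subseteq> S"
    and K_Up: "\<forall>t\<in>V. K_T S \<F> V E r t \<inter> V = Up V E r t"
  shows "weak_normal_tree S \<F> V E r"
proof -
  have common_lower_bound: "\<exists>w\<in>C. tree_le V E r w u \<and> tree_le V E r w v"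
    if C: "conn_set S \<F> C" and u: "u \<in> C" "u \<in> V" and v: "v \<in> C" "v \<in> V" for C u v
  proof -
    obtain w where "w \<in> C" "tree_le V E r w u" and C_w: "C \<inter> Down_strict V E r w = {}"
      using ex_tree_minimal_below[OF rt u] by blast
    have "w \<in> V"
      using tree_le_in_V(1)[OF \<open>tree_le V E r w u\<close>] .
    note K = mem_K_T[OF \<F> \<open>V \<subseteq> S\<close> \<open>w \<in> V\<close>] K_T_subset[OF \<F> \<open>V \<subseteq> S\<close> \<open>w \<in> V\<close>]
      conn_set_K_T[OF \<F> \<open>V \<subseteq> S\<close> \<open>w \<in> V\<close>] conn_set_subset_K_T[OF \<F> \<open>V \<subseteq> S\<close> \<open>w \<in> V\<close>]
    have "u \<in> K_T S \<F> V E r w"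
      using K_Up \<open>w \<in> V\<close> \<open>tree_le V E r w u\<close> u unfolding Up_def by blast
    then have "conn_set S \<F> (C \<union> K_T S \<F> V E r w)"
      using conn_set_Un[OF \<F> C K(3)] u by blast
    moreover have "(C \<union> K_T S \<F> V E r w) \<inter> Down_strict V E r w = {}"
      using C_w K(2) by blast
    ultimately have "C \<subseteq> K_T S \<F> V E r w"
      using K(1,4) by blast
    then have "tree_le V E r w v"
      using K_Up \<open>w \<in> V\<close> v unfolding Up_def by blast
    then show ?thesis
      using \<open>w \<in> C\<close> \<open>tree_le V E r w u\<close> by blast
  qed
  have K_T_witness: "\<exists>C. conn_set S \<F> C \<and> u \<in> C \<and> v \<in> C \<and> C \<inter> Down_strict V E r u = {}"
    if "u \<in> V" "v \<in> V" "tree_le V E r u v" for u v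
  proof -
    have "v \<in> K_T S \<F> V E r u"
      using K_Up that unfolding Up_def by blast
    then show ?thesis
      using mem_K_T[OF \<F> \<open>V \<subseteq> S\<close> \<open>u \<in> V\<close>] K_T_subset[OF \<F> \<open>V \<subseteq> S\<close> \<open>u \<in> V\<close>]
        conn_set_K_T[OF \<F> \<open>V \<subseteq> S\<close> \<open>u \<in> V\<close>] by blast
  qed
  show ?thesis
    unfolding weak_normal_tree_def using rt \<open>V \<subseteq> S\<close> common_lower_bound K_T_witness by blast
qed

theorem proposition2p4:
  fixes S :: "'a set" and \<F> :: "'a set set" and V :: "'a set" and E :: "'a set set" and r :: 'a
  assumes "connectoid S \<F>"
    and "rooted_tree V E r"
    and "V \<subseteq> S"
  shows "(weak_normal_tree S \<F> V E r \<longleftrightarrow>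
            (\<forall>t\<in>V. K_T S \<F> V E r t \<inter> V = Up V E r t))
         \<and> (weak_normal_tree S \<F> V E r \<and> V = S \<longrightarrow>
            (\<forall>t\<in>V. K_T S \<F> V E r t = Up V E r t))"
proof (intro conjI impI ballI)
  show "weak_normal_tree S \<F> V E r \<longleftrightarrow> (\<forall>t\<in>V. K_T S \<F> V E r t \<inter> V = Up V E r t)"
    using K_T_inter_eq_Up_if_weak_normal_tree[OF assms(1)]
      weak_normal_tree_if_K_T_inter_eq_Up[OF assms] by blast
next
  fix t assume "weak_normal_tree S \<F> V E r \<and> V = S" "t \<in> V"
  moreover have "K_T S \<F> V E r t \<subseteq> S"
    using K_T_subset[OF assms(1,3) \<open>t \<in> V\<close>] by blast
  ultimately show "K_T S \<F> V E r t = Up V E r t"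
    using K_T_inter_eq_Up_if_weak_normal_tree[OF assms(1)] by blast
qed

end
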